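(* If $T\in\mathcal{T}^*_3$ has root $v$ and $n$ vertices of which $k$ are not leaves, then $\lambda(T,v)\ge\frac{n+1}{2}+\frac{k-1}{10}$.
   Context: All trees are finite. $\mathcal{T}^*_3$ is the set of rooted trees in which the root has degree at least 2 and every other vertex of degree at least 2 has degree at least 3, together with the single-vertex rooted tree. Here leaves are the non-root vertices of degree 1; the root is counted among the $k$ non-leaf vertices. A subtree is a nonempty vertex set inducing a connected subgraph, and $\lambda(T,v)$ is the average number of vertices over all subtrees of $T$ containing $v$. *)

theory Defs
  imports Complex_Main
begin

definition simple_graph :: "'a set \<Rightarrow> 'a set set \<Rightarrow> bool" where
  "simple_graph V E \<longleftrightarrow> finite V \<and> (\<forall>e\<in>E. \<exists>x y. x \<in> V \<and> y \<in> V \<and> x \<noteq> y \<and> e = {x, y})"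

definition adj_in :: "'a set set \<Rightarrow> 'a set \<Rightarrow> ('a \<times> 'a) set" where
  "adj_in E S = {(x, y). x \<in> S \<and> y \<in> S \<and> {x, y} \<in> E}"

definition induces_connected :: "'a set set \<Rightarrow> 'a set \<Rightarrow> bool" where
  "induces_connected E S \<longleftrightarrow> S \<noteq> {} \<and> (\<forall>x\<in>S. \<forall>y\<in>S. (x, y) \<in> (adj_in E S)\<^sup>*)"

definition is_cycle :: "'a set set \<Rightarrow> 'a list \<Rightarrow> bool" where
  "is_cycle E cs \<longleftrightarrow> length cs \<ge> 3 \<and> distinct cs \<and>
     (\<forall>i < length cs - 1. {cs ! i, cs ! Suc i} \<in> E) \<and> {last cs, hd cs} \<in> E"

definition is_tree :: "'a set \<Rightarrow> 'a set set \<Rightarrow> bool" where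
  "is_tree V E \<longleftrightarrow> simple_graph V E \<and> induces_connected E V \<and>
     \<not> (\<exists>cs. set cs \<subseteq> V \<and> is_cycle E cs)"

definition degree :: "'a set set \<Rightarrow> 'a \<Rightarrow> nat" where
  "degree E v = card {e \<in> E. v \<in> e}"

definition leaves :: "'a set \<Rightarrow> 'a set set \<Rightarrow> 'a \<Rightarrow> 'a set" where
  "leaves V E r = {u \<in> V. u \<noteq> r \<and> degree E u = 1}"

definition in_T3star :: "'a set \<Rightarrow> 'a set set \<Rightarrow> 'a \<Rightarrow> bool" where
  "in_T3star V E r \<longleftrightarrow> is_tree V E \<and> r \<in> V \<and>
     (V = {r} \<or>
      (degree E r \<ge> 2 \<and> (\<forall>u \<in> V - {r}. degree E u \<ge> 2 \<longrightarrow> degree E u \<ge> 3)))"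

definition subtrees_containing :: "'a set \<Rightarrow> 'a set set \<Rightarrow> 'a \<Rightarrow> 'a set set" where
  "subtrees_containing V E v = {S. S \<subseteq> V \<and> v \<in> S \<and> induces_connected E S}"

definition local_mean :: "'a set \<Rightarrow> 'a set set \<Rightarrow> 'a \<Rightarrow> real" where
  "local_mean V E v =
     (\<Sum>S\<in>subtrees_containing V E v. real (card S)) / real (card (subtrees_containing V E v))"

end

theory Submission
  imports Defs
begin

text \<open>
  Let r be the root and c a neighbour of r. Removing the edge {r, c} splits the tree into the
  branch B at c and the rest R containing r. A subtree containing r is X \<union> Y, where X is a
  subtree of R containing r and Y is either empty or a subtree of B containing c; hence
  N = N_R (1 + N_B) and S = S_R (1 + N_B) + N_R S_B for the number N and the total size S
  of the subtrees containing the root. Induction on the number of vertices then proves the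
  bound S \<ge> N ((n + 1)/2 + (k - 1)/10) together with 4N \<ge> 5n + k whenever the root has degree
  at least 2. Since every non-leaf c has degree at least 3, c has degree at least 2 in B, and the
  second inequality for B is exactly what makes attaching B raise the mean enough.
\<close>

lemma adj_in_sym: "(x, y) \<in> adj_in E S \<Longrightarrow> (y, x) \<in> adj_in E S"
  by (auto simp: adj_in_def insert_commute)

lemma rtrancl_adj_in_sym: "(x, y) \<in> (adj_in E S)\<^sup>* \<Longrightarrow> (y, x) \<in> (adj_in E S)\<^sup>*"
  by (induction rule: rtrancl_induct) (auto intro: converse_rtrancl_into_rtrancl adj_in_sym)

lemma rtrancl_adj_in_mono: "S \<subseteq> T \<Longrightarrow> p \<in> (adj_in E S)\<^sup>* \<Longrightarrow> p \<in> (adj_in E T)\<^sup>*"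
  using rtrancl_mono[of "adj_in E S" "adj_in E T"] by (auto simp: adj_in_def)

lemma rtrancl_adj_in_first_edge:
  "(x, y) \<in> (adj_in E S)\<^sup>* \<Longrightarrow> x \<noteq> y \<Longrightarrow> \<exists>z. {x, z} \<in> E"
  by (erule converse_rtranclE) (auto simp: adj_in_def)

lemma rtrancl_adj_in_mem: "(x, y) \<in> (adj_in E S)\<^sup>* \<Longrightarrow> x \<noteq> y \<Longrightarrow> y \<in> S"
  by (induction rule: rtrancl_induct) (auto simp: adj_in_def)

lemma induces_connectedI:
  assumes "r \<in> S" "\<And>x. x \<in> S \<Longrightarrow> (r, x) \<in> (adj_in E S)\<^sup>*"
  shows "induces_connected E S"
  unfolding induces_connected_def
  using assms by (meson empty_iff rtrancl_adj_in_sym rtrancl_trans)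

lemma induces_connectedD:
  "induces_connected E S \<Longrightarrow> r \<in> S \<Longrightarrow> x \<in> S \<Longrightarrow> (r, x) \<in> (adj_in E S)\<^sup>*"
  unfolding induces_connected_def by blast

lemma induces_connected_Un_edge:
  assumes "induces_connected E X" "induces_connected E Y" "r \<in> X" "c \<in> Y" "{r, c} \<in> E"
  shows "induces_connected E (X \<union> Y)"
proof (rule induces_connectedI)
  show "r \<in> X \<union> Y" using assms by simp
  have rc: "(r, c) \<in> adj_in E (X \<union> Y)" using assms by (auto simp: adj_in_def)
  fix x assume "x \<in> X \<union> Y"
  then show "(r, x) \<in> (adj_in E (X \<union> Y))\<^sup>*"
  proof
    assume "x \<in> X"
    then show ?thesis
      using induces_connectedD[OF assms(1,3)] rtrancl_adj_in_mono[of X "X \<union> Y"] by blast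
  next
    assume "x \<in> Y"
    then have "(c, x) \<in> (adj_in E (X \<union> Y))\<^sup>*"
      using induces_connectedD[OF assms(2,4)] rtrancl_adj_in_mono[of Y "X \<union> Y"] by blast
    with rc show ?thesis by (rule converse_rtrancl_into_rtrancl)
  qed
qed

fun is_walk :: "'a set set \<Rightarrow> 'a list \<Rightarrow> bool" where
  "is_walk E (x # y # xs) \<longleftrightarrow> {x, y} \<in> E \<and> is_walk E (y # xs)"
| "is_walk E _ \<longleftrightarrow> True"

lemma is_walk_nth: "is_walk E xs \<Longrightarrow> i < length xs - 1 \<Longrightarrow> {xs ! i, xs ! Suc i} \<in> E"
proof (induction E xs arbitrary: i rule: is_walk.induct)
  case (1 E x y xs) then show ?case by (cases i) auto
qed auto

lemma is_walk_tl: "is_walk E xs \<Longrightarrow> is_walk E (tl xs)"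
  by (induction E xs rule: is_walk.induct) auto

lemma is_walk_drop: "is_walk E xs \<Longrightarrow> is_walk E (drop n xs)"
  by (induction n arbitrary: xs) (auto simp: drop_Suc is_walk_tl)

lemma is_walk_Cons: "p \<noteq> [] \<Longrightarrow> is_walk E (x # p) \<longleftrightarrow> {x, hd p} \<in> E \<and> is_walk E p"
  by (cases p) auto

lemma rtrancl_adj_in_path:
  assumes "(x, y) \<in> (adj_in E W)\<^sup>*"
  shows "\<exists>p. p \<noteq> [] \<and> hd p = x \<and> last p = y \<and> distinct p \<and> set p \<subseteq> insert x W \<and> is_walk E p"
  using assms
proof (induction rule: converse_rtrancl_induct)
  case base then show ?case by (intro exI[of _ "[y]"]) auto
next
  case (step x z)
  then obtain p where p: "p \<noteq> []" "hd p = z" "last p = y" "distinct p" "set p \<subseteq> insert z W" "is_walk E p"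
    by blast
  from step.hyps(1) have xz: "x \<in> W" "z \<in> W" "{x, z} \<in> E" by (auto simp: adj_in_def)
  show ?case
  proof (cases "x \<in> set p")
    case True
    then obtain i where i: "i < length p" "p ! i = x" by (auto simp: in_set_conv_nth)
    have "set (drop i p) \<subseteq> insert x W" using p xz set_drop_subset by fastforce
    then show ?thesis
      using i p is_walk_drop[OF p(6)] by (intro exI[of _ "drop i p"]) (auto simp: hd_drop_conv_nth)
  next
    case False
    with p xz show ?thesis by (intro exI[of _ "x # p"]) (auto simp: is_walk_Cons)
  qed
qed

lemma is_cycle_mono: "is_cycle F cs \<Longrightarrow> F \<subseteq> E \<Longrightarrow> is_cycle E cs"
  unfolding is_cycle_def by (meson subsetD)

lemma simple_graph_edge:
  assumes "simple_graph V E" "{x, y} \<in> E"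
  shows "x \<in> V" "y \<in> V" "x \<noteq> y"
proof -
  obtain a b where "a \<in> V" "b \<in> V" "a \<noteq> b" "{x, y} = {a, b}"
    using assms unfolding simple_graph_def by blast
  then show "x \<in> V" "y \<in> V" "x \<noteq> y" by (auto simp: doubleton_eq_iff)
qed

lemma simple_graph_edge_other_end:
  assumes "simple_graph V E" "e \<in> E" "u \<in> e"
  obtains w where "e = {u, w}"
proof -
  obtain x y where e: "e = {x, y}" using assms unfolding simple_graph_def by blast
  show thesis
  proof (cases "u = x")
    case True
    with e that show thesis by blast
  next
    case False
    with e assms(3) have "e = {u, x}" by blast
    with that show thesis .
  qed
qed

lemma simple_graph_finite_edges: "simple_graph V E \<Longrightarrow> finite E"
proof -
  assume sg: "simple_graph V E"
  have "E \<subseteq> Pow V"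
  proof
    fix e assume "e \<in> E"
    then obtain x y where "x \<in> V" "y \<in> V" "e = {x, y}" using sg unfolding simple_graph_def by blast
    then show "e \<in> Pow V" by simp
  qed
  moreover have "finite V" using sg by (simp add: simple_graph_def)
  ultimately show "finite E" by (meson finite_Pow_iff finite_subset)
qed

lemma simple_graph_neighbour:
  assumes "simple_graph V E" "degree E r \<noteq> 0"
  obtains c where "{r, c} \<in> E"
proof -
  have "{e \<in> E. r \<in> e} \<noteq> {}" using assms(2) unfolding degree_def by (metis card.empty)
  then obtain e where "e \<in> E" "r \<in> e" by blast
  with simple_graph_edge_other_end[OF assms(1)] obtain c where "e = {r, c}" by blast
  with \<open>e \<in> E\<close> that show thesis by blast
qed

lemma tree_degree_0:
  assumes "is_tree V E" "r \<in> V" "degree E r = 0"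
  shows "V = {r}"
proof (rule ccontr)
  assume "V \<noteq> {r}"
  then obtain x where x: "x \<in> V" "x \<noteq> r" using assms(2) by blast
  have "(r, x) \<in> (adj_in E V)\<^sup>*" using assms(1,2) x unfolding is_tree_def induces_connected_def by blast
  then obtain z where "{r, z} \<in> E" using rtrancl_adj_in_first_edge x by metis
  moreover have "finite E" using assms(1) simple_graph_finite_edges unfolding is_tree_def by blast
  ultimately have "degree E r \<noteq> 0" unfolding degree_def by (auto simp: card_eq_0_iff)
  with assms(3) show False by simp
qed

definition induced_edges :: "'a set set \<Rightarrow> 'a set \<Rightarrow> 'a set set" where
  "induced_edges E S = {e \<in> E. e \<subseteq> S}"

lemma induces_connected_induced_edges:
  "X \<subseteq> S \<Longrightarrow> induces_connected (induced_edges E S) X \<longleftrightarrow> induces_connected E X"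
proof -
  assume "X \<subseteq> S"
  then have "adj_in (induced_edges E S) X = adj_in E X" by (auto simp: adj_in_def induced_edges_def)
  then show ?thesis by (simp add: induces_connected_def)
qed

lemma subtrees_containing_induced_edges:
  "subtrees_containing S (induced_edges E S) x = {X. X \<subseteq> S \<and> x \<in> X \<and> induces_connected E X}"
  by (auto simp: subtrees_containing_def induces_connected_induced_edges)

lemma is_tree_induced_edges:
  assumes "is_tree V E" "S \<subseteq> V" "induces_connected E S"
  shows "is_tree S (induced_edges E S)"
  unfolding is_tree_def
proof (intro conjI)
  have sg: "simple_graph V E" using assms(1) by (simp add: is_tree_def)
  show "simple_graph S (induced_edges E S)"
    unfolding simple_graph_def
  proof (intro conjI ballI)
    show "finite S" using sg assms(2) finite_subset by (auto simp: simple_graph_def)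
    fix e assume "e \<in> induced_edges E S"
    then have e: "e \<in> E" "e \<subseteq> S" by (auto simp: induced_edges_def)
    then obtain x y where "x \<noteq> y" "e = {x, y}" using sg unfolding simple_graph_def by blast
    with e(2) show "\<exists>x y. x \<in> S \<and> y \<in> S \<and> x \<noteq> y \<and> e = {x, y}" by blast
  qed
  show "induces_connected (induced_edges E S) S"
    using assms(3) induces_connected_induced_edges by blast
  have "induced_edges E S \<subseteq> E" by (auto simp: induced_edges_def)
  then show "\<not> (\<exists>cs. set cs \<subseteq> S \<and> is_cycle (induced_edges E S) cs)"
    using assms(1,2) is_cycle_mono unfolding is_tree_def by blast
qed

lemma degree_induced_edges:
  assumes "\<And>e. e \<in> E \<Longrightarrow> u \<in> e \<Longrightarrow> e \<subseteq> S"
  shows "degree (induced_edges E S) u = degree E u"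
proof -
  have "{e \<in> induced_edges E S. u \<in> e} = {e \<in> E. u \<in> e}"
    using assms unfolding induced_edges_def by blast
  then show ?thesis by (simp add: degree_def)
qed

lemma degree_induced_edges_Suc:
  assumes "finite E" "e\<^sub>0 \<in> E" "u \<in> e\<^sub>0" "\<not> e\<^sub>0 \<subseteq> S"
    and "\<And>e. e \<in> E \<Longrightarrow> u \<in> e \<Longrightarrow> e \<noteq> e\<^sub>0 \<Longrightarrow> e \<subseteq> S"
  shows "degree E u = Suc (degree (induced_edges E S) u)"
proof -
  let ?A = "{e \<in> induced_edges E S. u \<in> e}"
  have "{e \<in> E. u \<in> e} = insert e\<^sub>0 ?A"
    using assms(2-5) unfolding induced_edges_def by blast
  moreover have "e\<^sub>0 \<notin> ?A" using assms(4) by (simp add: induced_edges_def)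
  moreover have "finite ?A" using assms(1) by (simp add: induced_edges_def)
  ultimately show ?thesis unfolding degree_def by simp
qed

lemma finite_subtrees_containing: "finite V \<Longrightarrow> finite (subtrees_containing V E x)"
  by (rule finite_subset[of _ "Pow V"]) (auto simp: subtrees_containing_def)

lemma subtrees_containing_singleton: "subtrees_containing {r} E r = {{r}}"
  by (auto simp: subtrees_containing_def induces_connected_def)

lemma leaves_singleton: "leaves {r} E r = {}"
  by (auto simp: leaves_def)

text \<open>The invariant proved by induction, for N subtrees containing the root of total size S in a
  tree with n vertices, k non-leaves and root degree d.\<close>
definition mean_bound_inv :: "real \<Rightarrow> real \<Rightarrow> real \<Rightarrow> real \<Rightarrow> nat \<Rightarrow> bool" where
  "mean_bound_inv N S n k d \<longleftrightarrow>
     N * ((n + 1) / 2 + (k - 1) / 10) \<le> S \<and> 5 * n + k \<le> 4 * N + 3 \<and>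
     (d = 0 \<longrightarrow> N = 1 \<and> S = 1 \<and> n = 1 \<and> k = 1) \<and>
     (1 \<le> d \<longrightarrow> 2 \<le> N) \<and> (2 \<le> d \<longrightarrow> 5 * n + k \<le> 4 * N)"

lemma mean_bound_inv_singleton: "mean_bound_inv 1 1 1 1 0"
  by (simp add: mean_bound_inv_def)

lemma mean_bound_inv_ge_1: "mean_bound_inv N S n k d \<Longrightarrow> 1 \<le> N"
  unfolding mean_bound_inv_def by (cases d) auto

lemma mean_bound_inv_add_leaf:
  assumes "mean_bound_inv N S n k d"
  shows "mean_bound_inv (2 * N) (2 * S + N) (n + 1) k (Suc d)"
proof -
  have "2 * N * ((n + 1 + 1) / 2 + (k - 1) / 10) = 2 * (N * ((n + 1) / 2 + (k - 1) / 10)) + N"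
    by (simp add: field_simps)
  moreover have "5 * (n + 1) + k \<le> 4 * (2 * N)" if "1 \<le> d"
    using assms that unfolding mean_bound_inv_def by auto
  ultimately show ?thesis
    using assms mean_bound_inv_ge_1[OF assms] unfolding mean_bound_inv_def by (cases d) auto
qed

lemma mean_bound_inv_add_branch:
  assumes inv: "mean_bound_inv N S n k d" and inv': "mean_bound_inv N' S' n' k' d'" and "2 \<le> d'"
  shows "mean_bound_inv (N * (1 + N')) (S * (1 + N') + N * S') (n + n') (k + k') (Suc d)"
proof -
  have N: "1 \<le> N" using mean_bound_inv_ge_1[OF inv] .
  have N': "2 \<le> N'" "5 * n' + k' \<le> 4 * N'" "N' * ((n' + 1) / 2 + (k' - 1) / 10) \<le> S'"
    using inv' \<open>2 \<le> d'\<close> unfolding mean_bound_inv_def by auto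
  \<comment> \<open>Here 4N' \<ge> 5n' + k' is used: averaged over the 1 + N' choices of Y (including Y = {}),
    the branch adds n'/2 + k'/10, which is exactly the increase of the target bound.\<close>
  have "(1 + N') * (n' / 2 + k' / 10) \<le> N' * ((n' + 1) / 2 + (k' - 1) / 10)"
    using N'(2) by (simp add: field_simps)
  with N'(3) have branch: "(1 + N') * (n' / 2 + k' / 10) \<le> S'" by linarith
  have rest: "N * ((n + 1) / 2 + (k - 1) / 10) * (1 + N') \<le> S * (1 + N')"
    using inv N' unfolding mean_bound_inv_def by (intro mult_right_mono) auto
  have "N * (1 + N') * ((n + n' + 1) / 2 + (k + k' - 1) / 10) =
        N * ((n + 1) / 2 + (k - 1) / 10) * (1 + N') + N * ((1 + N') * (n' / 2 + k' / 10))"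
    by (simp add: field_simps)
  also have "\<dots> \<le> S * (1 + N') + N * S'"
    using rest mult_left_mono[OF branch] N by (intro add_mono) auto
  finally have mean: "N * (1 + N') * ((n + n' + 1) / 2 + (k + k' - 1) / 10) \<le> S * (1 + N') + N * S'" .
  have "1 * 2 \<le> N * (1 + N')" using N N' by (intro mult_mono) auto
  moreover have "5 * (n + n') + (k + k') \<le> 4 * (N * (1 + N')) + 3"
  proof -
    have "1 * N' \<le> N * N'" using N N' by (intro mult_right_mono) auto
    then show ?thesis using inv N'(2) unfolding mean_bound_inv_def by (simp add: algebra_simps)
  qed
  moreover have "5 * (n + n') + (k + k') \<le> 4 * (N * (1 + N'))" if "1 \<le> d"
  proof -
    have "2 \<le> N" "5 * n + k \<le> 4 * N + 3" using inv that unfolding mean_bound_inv_def by auto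
    moreover have "1 * 1 \<le> N' * (N - 1)" using \<open>2 \<le> N\<close> N' by (intro mult_mono) auto
    ultimately show ?thesis using N'(2) by (simp add: algebra_simps)
  qed
  ultimately show ?thesis using mean unfolding mean_bound_inv_def by auto
qed

text \<open>Unlike in_T3star, this class does not constrain the root, so it is inherited by both parts
  when the tree is split at a root edge.\<close>
definition T3_rooted :: "'a set \<Rightarrow> 'a set set \<Rightarrow> 'a \<Rightarrow> bool" where
  "T3_rooted V E r \<longleftrightarrow> is_tree V E \<and> r \<in> V \<and> (\<forall>u \<in> V - {r}. 2 \<le> degree E u \<longrightarrow> 3 \<le> degree E u)"

definition tree_mean_inv :: "'a set \<Rightarrow> 'a set set \<Rightarrow> 'a \<Rightarrow> bool" where
  "tree_mean_inv V E r \<longleftrightarrow>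
     mean_bound_inv (real (card (subtrees_containing V E r))) (\<Sum>S\<in>subtrees_containing V E r. real (card S))
       (real (card V)) (real (card (V - leaves V E r))) (degree E r)"

locale root_edge_split =
  fixes V :: "'a set" and E :: "'a set set" and r c :: 'a
  assumes tree: "is_tree V E" and r_in_V: "r \<in> V" and root_edge: "{r, c} \<in> E"
begin

definition branch :: "'a set" where
  "branch = {y. (c, y) \<in> (adj_in E (V - {r}))\<^sup>*}"

definition rest :: "'a set" where
  "rest = V - branch"

lemma simple_graph: "simple_graph V E"
  using tree by (simp add: is_tree_def)

lemma finite_V: "finite V"
  using simple_graph by (simp add: simple_graph_def)

lemma finite_E: "finite E"
  using simple_graph by (rule simple_graph_finite_edges)

lemma no_cycle: "\<not> (\<exists>cs. set cs \<subseteq> V \<and> is_cycle E cs)"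
  using tree by (simp add: is_tree_def)

lemma c_in_V: "c \<in> V" and c_neq_r: "c \<noteq> r"
  using simple_graph_edge[OF simple_graph root_edge] by auto

lemma c_in_branch: "c \<in> branch"
  by (simp add: branch_def)

lemma branch_subset: "branch \<subseteq> V - {r}"
proof
  fix y assume "y \<in> branch"
  then have "(c, y) \<in> (adj_in E (V - {r}))\<^sup>*" by (simp add: branch_def)
  then show "y \<in> V - {r}"
    using c_in_V c_neq_r rtrancl_adj_in_mem[of c y] by (cases "c = y") auto
qed

lemma r_notin_branch: "r \<notin> branch"
  using branch_subset by blast

lemma r_in_rest: "r \<in> rest"
  using r_notin_branch r_in_V by (simp add: rest_def)

lemma rest_subset: "rest \<subseteq> V"
  by (auto simp: rest_def)

lemma rest_branch_disjoint: "rest \<inter> branch = {}"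
  by (auto simp: rest_def)

lemma finite_rest: "finite rest" and finite_branch: "finite branch"
  using finite_subset[OF rest_subset] finite_subset[OF branch_subset] finite_V by auto

lemma card_rest_branch: "card V = card rest + card branch"
proof -
  have "V = rest \<union> branch" using branch_subset by (auto simp: rest_def)
  then show ?thesis using card_Un_disjoint[OF finite_rest finite_branch rest_branch_disjoint] by simp
qed

lemma branch_closed: "x \<in> branch \<Longrightarrow> {x, w} \<in> E \<Longrightarrow> w \<noteq> r \<Longrightarrow> w \<in> branch"
proof -
  assume a: "x \<in> branch" "{x, w} \<in> E" "w \<noteq> r"
  then have "(x, w) \<in> adj_in E (V - {r})"
    using branch_subset simple_graph_edge[OF simple_graph a(2)] by (auto simp: adj_in_def)
  with a(1) show "w \<in> branch" by (simp add: branch_def)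
qed

text \<open>Otherwise the edges {r, c} and {r, w} would close a path from c to w avoiding r to a cycle.\<close>
lemma root_edge_to_branch: "w \<in> branch \<Longrightarrow> {r, w} \<in> E \<Longrightarrow> w = c"
proof (rule ccontr)
  assume w: "w \<in> branch" "{r, w} \<in> E" "w \<noteq> c"
  from w(1) have "(c, w) \<in> (adj_in E (V - {r}))\<^sup>*" by (simp add: branch_def)
  from rtrancl_adj_in_path[OF this] obtain p where p: "p \<noteq> []" "hd p = c" "last p = w" "distinct p"
    "set p \<subseteq> insert c (V - {r})" "is_walk E p"
    by blast
  have "insert c (V - {r}) = V - {r}" using c_in_V c_neq_r by blast
  with p(5) have "set p \<subseteq> V - {r}" by simp
  have "length p \<ge> 2" using p w(3) by (cases p; cases "tl p") auto
  have "is_cycle E (r # p)"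
    unfolding is_cycle_def
  proof (intro conjI)
    show "3 \<le> length (r # p)" using \<open>length p \<ge> 2\<close> by simp
    show "distinct (r # p)" using p \<open>set p \<subseteq> V - {r}\<close> by auto
    have "is_walk E (r # p)" using p root_edge by (simp add: is_walk_Cons)
    then show "\<forall>i < length (r # p) - 1. {(r # p) ! i, (r # p) ! Suc i} \<in> E" using is_walk_nth by blast
    show "{last (r # p), hd (r # p)} \<in> E" using p w(2) by (simp add: insert_commute)
  qed
  moreover have "set (r # p) \<subseteq> V" using \<open>set p \<subseteq> V - {r}\<close> r_in_V by auto
  ultimately show False using no_cycle by blast
qed

text \<open>Since {r, c} is the only edge between the rest and the branch, a walk from r inside W
  reaches each vertex of the branch through c.\<close>
lemma walk_from_root_split:
  assumes "r \<in> W" "(r, y) \<in> (adj_in E W)\<^sup>*"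
  shows "(y \<in> branch \<longrightarrow> c \<in> W \<and> (c, y) \<in> (adj_in E (W \<inter> branch))\<^sup>*) \<and>
         (y \<notin> branch \<longrightarrow> (r, y) \<in> (adj_in E (W - branch))\<^sup>*)"
  using assms(2)
proof (induction rule: rtrancl_induct)
  case base
  then show ?case using r_notin_branch by simp
next
  case (step y z)
  have yz: "y \<in> W" "z \<in> W" "{y, z} \<in> E" using step.hyps(2) by (auto simp: adj_in_def)
  consider "y \<in> branch" "z \<in> branch" | "y \<in> branch" "z \<notin> branch"
    | "y \<notin> branch" "z \<in> branch" | "y \<notin> branch" "z \<notin> branch" by blast
  then show ?case
  proof cases
    case 1
    then have "(y, z) \<in> adj_in E (W \<inter> branch)" using yz by (auto simp: adj_in_def)
    moreover have "c \<in> W" "(c, y) \<in> (adj_in E (W \<inter> branch))\<^sup>*" using 1 step.IH by auto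
    ultimately show ?thesis using 1 by auto
  next
    case 2
    then have "z = r" using branch_closed yz(3) by blast
    with 2 show ?thesis by simp
  next
    case 3
    have "{z, y} \<in> E" using yz(3) by (simp add: insert_commute)
    with 3 have "y = r" using branch_closed[of z y] by blast
    then have "z = c" using root_edge_to_branch 3 yz(3) by simp
    then show ?thesis using yz(2) c_in_branch by simp
  next
    case 4
    then have "(y, z) \<in> adj_in E (W - branch)" using yz by (auto simp: adj_in_def)
    moreover have "(r, y) \<in> (adj_in E (W - branch))\<^sup>*" using 4 step.IH by auto
    ultimately show ?thesis using 4 by auto
  qed
qed

lemma connected_rest: "induces_connected E rest"
proof (rule induces_connectedI[OF r_in_rest])
  fix x assume "x \<in> rest"
  moreover have "(r, x) \<in> (adj_in E V)\<^sup>*" if "x \<in> V"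
    using tree r_in_V that by (simp add: is_tree_def induces_connectedD)
  ultimately show "(r, x) \<in> (adj_in E rest)\<^sup>*"
    using walk_from_root_split[OF r_in_V] by (auto simp: rest_def)
qed

lemma connected_branch: "induces_connected E branch"
proof (rule induces_connectedI[OF c_in_branch])
  fix x assume x: "x \<in> branch"
  then have "(r, x) \<in> (adj_in E V)\<^sup>*"
    using tree r_in_V branch_subset by (auto simp: is_tree_def induces_connectedD)
  then have "(c, x) \<in> (adj_in E (V \<inter> branch))\<^sup>*"
    using walk_from_root_split[OF r_in_V] x by blast
  moreover have "V \<inter> branch = branch" using branch_subset by blast
  ultimately show "(c, x) \<in> (adj_in E branch)\<^sup>*" by simp
qed

lemma tree_rest: "is_tree rest (induced_edges E rest)"
  using is_tree_induced_edges[OF tree rest_subset connected_rest] .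

lemma tree_branch: "is_tree branch (induced_edges E branch)"
  using is_tree_induced_edges[OF tree _ connected_branch] branch_subset by blast

lemma degree_root: "degree E r = Suc (degree (induced_edges E rest) r)"
proof -
  have "\<not> {r, c} \<subseteq> rest" using c_in_branch by (auto simp: rest_def)
  moreover have "e \<subseteq> rest" if e: "e \<in> E" "r \<in> e" "e \<noteq> {r, c}" for e
  proof -
    obtain w where w: "e = {r, w}" using simple_graph_edge_other_end[OF simple_graph e(1,2)] .
    then have "w \<notin> branch" using root_edge_to_branch e by blast
    moreover have "w \<in> V" using simple_graph_edge(2)[OF simple_graph] e(1) w by blast
    ultimately show "e \<subseteq> rest" using w r_in_rest by (simp add: rest_def)
  qed
  ultimately show ?thesis by (rule degree_induced_edges_Suc[OF finite_E root_edge insertI1])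
qed

lemma degree_c: "degree E c = Suc (degree (induced_edges E branch) c)"
proof -
  have "\<not> {r, c} \<subseteq> branch" using r_notin_branch by simp
  moreover have "e \<subseteq> branch" if e: "e \<in> E" "c \<in> e" "e \<noteq> {r, c}" for e
  proof -
    obtain w where w: "e = {c, w}" using simple_graph_edge_other_end[OF simple_graph e(1,2)] .
    then have "w \<noteq> r" using e(3) by blast
    then show "e \<subseteq> branch" using w e(1) branch_closed c_in_branch by blast
  qed
  moreover have "c \<in> {r, c}" by simp
  ultimately show ?thesis by (intro degree_induced_edges_Suc[OF finite_E root_edge])
qed

lemma degree_rest: "u \<in> rest \<Longrightarrow> u \<noteq> r \<Longrightarrow> degree (induced_edges E rest) u = degree E u"
proof (rule degree_induced_edges)
  fix e assume u: "u \<in> rest" "u \<noteq> r" and e: "e \<in> E" "u \<in> e"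
  obtain w where w: "e = {u, w}" using simple_graph_edge_other_end[OF simple_graph e] .
  have "w \<notin> branch"
  proof
    assume "w \<in> branch"
    moreover have "{w, u} \<in> E" using e(1) w by (metis insert_commute)
    ultimately have "u \<in> branch" using branch_closed u(2) by blast
    then show False using u(1) by (simp add: rest_def)
  qed
  moreover have "w \<in> V" using simple_graph_edge(2)[OF simple_graph] e(1) w by blast
  ultimately show "e \<subseteq> rest" using w u(1) by (simp add: rest_def)
qed

lemma degree_branch: "u \<in> branch \<Longrightarrow> u \<noteq> c \<Longrightarrow> degree (induced_edges E branch) u = degree E u"
proof (rule degree_induced_edges)
  fix e assume u: "u \<in> branch" "u \<noteq> c" and e: "e \<in> E" "u \<in> e"
  obtain w where w: "e = {u, w}" using simple_graph_edge_other_end[OF simple_graph e] .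
  have "w \<noteq> r"
  proof
    assume "w = r"
    then have "{r, u} \<in> E" using e(1) w by (metis insert_commute)
    then show False using root_edge_to_branch u by blast
  qed
  then show "e \<subseteq> branch" using branch_closed u(1) e(1) w by blast
qed

abbreviation rest_subtrees :: "'a set set" where
  "rest_subtrees \<equiv> subtrees_containing rest (induced_edges E rest) r"

abbreviation branch_subtrees :: "'a set set" where
  "branch_subtrees \<equiv> subtrees_containing branch (induced_edges E branch) c"

lemma subtrees_root_eq_Un_image:
  "subtrees_containing V E r = (\<lambda>(X, Y). X \<union> Y) ` (rest_subtrees \<times> insert {} branch_subtrees)"
proof (intro equalityI subsetI)
  fix S assume "S \<in> subtrees_containing V E r"
  then have S: "S \<subseteq> V" "r \<in> S" "induces_connected E S" by (auto simp: subtrees_containing_def)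
  have walks: "y \<in> S \<Longrightarrow> (y \<in> branch \<longrightarrow> c \<in> S \<and> (c, y) \<in> (adj_in E (S \<inter> branch))\<^sup>*) \<and>
      (y \<notin> branch \<longrightarrow> (r, y) \<in> (adj_in E (S - branch))\<^sup>*)" for y
    using walk_from_root_split[OF S(2)] induces_connectedD[OF S(3,2)] by blast
  have "S - branch \<in> rest_subtrees"
    unfolding subtrees_containing_induced_edges
    using S walks r_notin_branch by (auto simp: rest_def intro!: induces_connectedI[of r])
  moreover have "S \<inter> branch \<in> insert {} branch_subtrees"
  proof (cases "S \<inter> branch = {}")
    case False
    then have "c \<in> S \<inter> branch" using walks c_in_branch by blast
    then show ?thesis
      unfolding subtrees_containing_induced_edges using walks by (auto intro!: induces_connectedI)
  qed simp
  moreover have "S = (S - branch) \<union> (S \<inter> branch)" by blast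
  ultimately show "S \<in> (\<lambda>(X, Y). X \<union> Y) ` (rest_subtrees \<times> insert {} branch_subtrees)"
    by (intro image_eqI[where x = "(S - branch, S \<inter> branch)"]) auto
next
  fix S assume "S \<in> (\<lambda>(X, Y). X \<union> Y) ` (rest_subtrees \<times> insert {} branch_subtrees)"
  then obtain X Y where S: "S = X \<union> Y" and X: "X \<in> rest_subtrees" and Y: "Y \<in> insert {} branch_subtrees"
    by auto
  from X have X': "X \<subseteq> rest" "r \<in> X" "induces_connected E X"
    unfolding subtrees_containing_induced_edges by auto
  show "S \<in> subtrees_containing V E r"
  proof (cases "Y = {}")
    case True
    then show ?thesis using S X' rest_subset by (auto simp: subtrees_containing_def)
  next
    case False
    then have Y': "Y \<subseteq> branch" "c \<in> Y" "induces_connected E Y"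
      using Y unfolding subtrees_containing_induced_edges by auto
    have "induces_connected E (X \<union> Y)"
      using induces_connected_Un_edge[OF X'(3) Y'(3) X'(2) Y'(2) root_edge] .
    then show ?thesis using S X' Y' rest_subset branch_subset by (auto simp: subtrees_containing_def)
  qed
qed

lemma inj_on_Un_subtrees: "inj_on (\<lambda>(X, Y). X \<union> Y) (rest_subtrees \<times> insert {} branch_subtrees)"
proof (rule inj_onI, clarify)
  fix X Y X' Y'
  assume "X \<in> rest_subtrees" "X' \<in> rest_subtrees"
    and "Y \<in> insert {} branch_subtrees" "Y' \<in> insert {} branch_subtrees" and "X \<union> Y = X' \<union> Y'"
  moreover have "X \<subseteq> rest" "X' \<subseteq> rest" "Y \<subseteq> branch" "Y' \<subseteq> branch"
    using calculation unfolding subtrees_containing_induced_edges by auto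
  ultimately show "X = X' \<and> Y = Y'" using rest_branch_disjoint by blast
qed

lemma empty_notin_branch_subtrees: "{} \<notin> branch_subtrees"
  by (simp add: subtrees_containing_def)

lemma card_subtrees_root:
  "card (subtrees_containing V E r) = card rest_subtrees * Suc (card branch_subtrees)"
proof -
  have "card (subtrees_containing V E r) = card (rest_subtrees \<times> insert {} branch_subtrees)"
    unfolding subtrees_root_eq_Un_image using card_image[OF inj_on_Un_subtrees] .
  also have "\<dots> = card rest_subtrees * Suc (card branch_subtrees)"
    using empty_notin_branch_subtrees finite_subtrees_containing[OF finite_branch]
    by (simp add: card_cartesian_product)
  finally show ?thesis .
qed

lemma sum_card_subtrees_root:
  "(\<Sum>S\<in>subtrees_containing V E r. real (card S)) =
     (\<Sum>X\<in>rest_subtrees. real (card X)) * (1 + real (card branch_subtrees))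
     + real (card rest_subtrees) * (\<Sum>Y\<in>branch_subtrees. real (card Y))"
proof -
  have fin: "finite branch_subtrees" using finite_subtrees_containing[OF finite_branch] .
  have size: "real (card (X \<union> Y)) = real (card X) + real (card Y)"
    if "X \<in> rest_subtrees" "Y \<in> insert {} branch_subtrees" for X Y
  proof -
    have "X \<subseteq> rest" "Y \<subseteq> branch" using that by (auto simp: subtrees_containing_def)
    then have "finite X" "finite Y" "X \<inter> Y = {}"
      using rest_branch_disjoint finite_rest finite_branch finite_subset by blast+
    then show ?thesis by (simp add: card_Un_disjoint)
  qed
  have "(\<Sum>S\<in>subtrees_containing V E r. real (card S)) =
        (\<Sum>X\<in>rest_subtrees. \<Sum>Y\<in>insert {} branch_subtrees. real (card (X \<union> Y)))"
    unfolding subtrees_root_eq_Un_image sum.reindex[OF inj_on_Un_subtrees]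
    by (simp add: sum.cartesian_product case_prod_unfold)
  also have "\<dots> = (\<Sum>X\<in>rest_subtrees. real (card X) * (1 + real (card branch_subtrees))
                    + (\<Sum>Y\<in>branch_subtrees. real (card Y)))"
    using size fin empty_notin_branch_subtrees by (simp add: sum.distrib algebra_simps)
  also have "\<dots> = (\<Sum>X\<in>rest_subtrees. real (card X)) * (1 + real (card branch_subtrees))
                  + real (card rest_subtrees) * (\<Sum>Y\<in>branch_subtrees. real (card Y))"
    by (simp add: sum.distrib sum_distrib_right)
  finally show ?thesis .
qed

lemma leaves_rest: "u \<in> rest \<Longrightarrow> u \<in> leaves V E r \<longleftrightarrow> u \<in> leaves rest (induced_edges E rest) r"
  using degree_rest rest_subset by (auto simp: leaves_def)

lemma leaves_branch:
  "u \<in> branch \<Longrightarrow> u \<noteq> c \<Longrightarrow> u \<in> leaves V E r \<longleftrightarrow> u \<in> leaves branch (induced_edges E branch) c"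
  using degree_branch branch_subset by (auto simp: leaves_def)

lemma c_in_leaves_iff: "c \<in> leaves V E r \<longleftrightarrow> degree (induced_edges E branch) c = 0"
  using degree_c c_in_V c_neq_r by (auto simp: leaves_def)

lemma nonleaves_leaf_branch:
  assumes "degree (induced_edges E branch) c = 0"
  shows "V - leaves V E r = rest - leaves rest (induced_edges E rest) r"
proof -
  have "branch = {c}" using tree_degree_0[OF tree_branch c_in_branch assms] .
  then show ?thesis
    using assms leaves_rest c_in_leaves_iff branch_subset by (auto simp: rest_def)
qed

lemma nonleaves_inner_branch:
  assumes "degree (induced_edges E branch) c \<noteq> 0"
  shows "V - leaves V E r =
    (rest - leaves rest (induced_edges E rest) r) \<union> (branch - leaves branch (induced_edges E branch) c)"
proof -
  have "c \<notin> leaves branch (induced_edges E branch) c" by (simp add: leaves_def)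
  then show ?thesis
    using assms leaves_rest leaves_branch c_in_leaves_iff branch_subset by (auto simp: rest_def)
qed

lemma tree_mean_inv_root_edge_split:
  assumes rest: "tree_mean_inv rest (induced_edges E rest) r"
    and branch: "tree_mean_inv branch (induced_edges E branch) c"
    and degree_c_ge_3: "2 \<le> degree E c \<Longrightarrow> 3 \<le> degree E c"
  shows "tree_mean_inv V E r"
proof -
  define N\<^sub>R S\<^sub>R k\<^sub>R where "N\<^sub>R = real (card rest_subtrees)"
    and "S\<^sub>R = (\<Sum>X\<in>rest_subtrees. real (card X))"
    and "k\<^sub>R = real (card (rest - leaves rest (induced_edges E rest) r))"
  define N\<^sub>B S\<^sub>B k\<^sub>B where "N\<^sub>B = real (card branch_subtrees)"
    and "S\<^sub>B = (\<Sum>Y\<in>branch_subtrees. real (card Y))"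
    and "k\<^sub>B = real (card (branch - leaves branch (induced_edges E branch) c))"
  have inv_rest: "mean_bound_inv N\<^sub>R S\<^sub>R (real (card rest)) k\<^sub>R (degree (induced_edges E rest) r)"
    using rest unfolding tree_mean_inv_def N\<^sub>R_def S\<^sub>R_def k\<^sub>R_def .
  have inv_branch: "mean_bound_inv N\<^sub>B S\<^sub>B (real (card branch)) k\<^sub>B (degree (induced_edges E branch) c)"
    using branch unfolding tree_mean_inv_def N\<^sub>B_def S\<^sub>B_def k\<^sub>B_def .
  have N: "real (card (subtrees_containing V E r)) = N\<^sub>R * (1 + N\<^sub>B)"
    unfolding N\<^sub>R_def N\<^sub>B_def card_subtrees_root by (simp add: algebra_simps)
  have S: "(\<Sum>S\<in>subtrees_containing V E r. real (card S)) = S\<^sub>R * (1 + N\<^sub>B) + N\<^sub>R * S\<^sub>B"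
    unfolding N\<^sub>R_def N\<^sub>B_def S\<^sub>R_def S\<^sub>B_def sum_card_subtrees_root ..
  have n: "real (card V) = real (card rest) + real (card branch)"
    using card_rest_branch by simp
  show ?thesis
  proof (cases "degree (induced_edges E branch) c = 0")
    case True
    then have "branch = {c}" using tree_degree_0[OF tree_branch c_in_branch] by blast
    then have "N\<^sub>B = 1" "S\<^sub>B = 1" "real (card branch) = 1"
      unfolding N\<^sub>B_def S\<^sub>B_def by (simp_all add: subtrees_containing_singleton)
    moreover have "real (card (V - leaves V E r)) = k\<^sub>R"
      unfolding k\<^sub>R_def nonleaves_leaf_branch[OF True] ..
    ultimately show ?thesis
      using mean_bound_inv_add_leaf[OF inv_rest]
      unfolding tree_mean_inv_def N S n degree_root by (simp add: mult.commute)
  next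
    case False
    then have "2 \<le> degree (induced_edges E branch) c" using degree_c degree_c_ge_3 by simp
    moreover have "real (card (V - leaves V E r)) = k\<^sub>R + k\<^sub>B"
    proof -
      have "(rest - leaves rest (induced_edges E rest) r) \<inter> (branch - leaves branch (induced_edges E branch) c) = {}"
        using rest_branch_disjoint by blast
      then show ?thesis unfolding k\<^sub>R_def k\<^sub>B_def nonleaves_inner_branch[OF False]
        using finite_rest finite_branch by (simp add: card_Un_disjoint)
    qed
    ultimately show ?thesis
      using mean_bound_inv_add_branch[OF inv_rest inv_branch]
      unfolding tree_mean_inv_def N S n degree_root by simp
  qed
qed

lemma T3_rooted_rest: "T3_rooted V E r \<Longrightarrow> T3_rooted rest (induced_edges E rest) r"
  using tree_rest r_in_rest degree_rest rest_subset by (auto simp: T3_rooted_def)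

lemma T3_rooted_branch: "T3_rooted V E r \<Longrightarrow> T3_rooted branch (induced_edges E branch) c"
  using tree_branch c_in_branch degree_branch branch_subset by (auto simp: T3_rooted_def)

lemma card_rest_less: "card rest < card V" and card_branch_less: "card branch < card V"
  using card_rest_branch finite_rest finite_branch r_in_rest c_in_branch
  by (auto simp: card_gt_0_iff)

end

lemma tree_mean_inv_if_T3_rooted: "T3_rooted V E r \<Longrightarrow> tree_mean_inv V E r"
proof (induction "card V" arbitrary: V E r rule: less_induct)
  case less
  then have tree: "is_tree V E" and r_in_V: "r \<in> V" by (auto simp: T3_rooted_def)
  show ?case
  proof (cases "degree E r = 0")
    case True
    then have "V = {r}" using tree_degree_0[OF tree r_in_V] by blast
    then show ?thesis
      using True mean_bound_inv_singleton
      by (simp add: tree_mean_inv_def subtrees_containing_singleton leaves_singleton)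
  next
    case False
    have "simple_graph V E" using tree by (simp add: is_tree_def)
    then obtain c where "{r, c} \<in> E" using False by (rule simple_graph_neighbour)
    with tree r_in_V interpret root_edge_split V E r c by unfold_locales
    have "tree_mean_inv rest (induced_edges E rest) r"
      using less.hyps[OF card_rest_less T3_rooted_rest[OF less.prems]] .
    moreover have "tree_mean_inv branch (induced_edges E branch) c"
      using less.hyps[OF card_branch_less T3_rooted_branch[OF less.prems]] .
    moreover have "2 \<le> degree E c \<Longrightarrow> 3 \<le> degree E c"
      using less.prems c_in_V c_neq_r by (auto simp: T3_rooted_def)
    ultimately show ?thesis by (rule tree_mean_inv_root_edge_split)
  qed
qed

theorem mainTheorem12:
  fixes V :: "'a set" and E :: "'a set set" and v :: 'a and n k :: nat
  assumes "in_T3star V E v"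
    and "n = card V"
    and "k = card (V - leaves V E v)"
  shows "local_mean V E v \<ge> (real n + 1) / 2 + (real k - 1) / 10"
proof -
  have "T3_rooted V E v" using assms(1) by (auto simp: in_T3star_def T3_rooted_def)
  then have inv: "tree_mean_inv V E v" by (rule tree_mean_inv_if_T3_rooted)
  define N where "N = real (card (subtrees_containing V E v))"
  have bound: "mean_bound_inv N (\<Sum>S\<in>subtrees_containing V E v. real (card S)) (real n) (real k) (degree E v)"
    using inv unfolding tree_mean_inv_def N_def assms(2,3) .
  then have "N * ((real n + 1) / 2 + (real k - 1) / 10) \<le> (\<Sum>S\<in>subtrees_containing V E v. real (card S))"
    unfolding mean_bound_inv_def by (rule conjunct1)
  moreover have "1 \<le> N" using mean_bound_inv_ge_1[OF bound] .
  ultimately show ?thesis unfolding local_mean_def N_def[symmetric] by (simp add: pos_le_divide_eq mult.commute)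
qed

end
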